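(* For every perturbation $(F_\epsilon)_{\epsilon>0}$ of a cellular automaton, the set $\mathcal{M}_{\mathrm{stable}}$ of stable measures is convex.
   Context: $\mathcal{A}$ finite; $\mathcal{M}(\mathcal{A}^{\mathbb{Z}})$ is the set of shift-invariant Borel probability measures with the weak topology. A perturbation of a CA $F$ (neighborhood $\mathcal{N}$, local rule $f$) is a family $(F_\epsilon)_{\epsilon>0}$ of probabilistic cellular automata with neighborhood $\mathcal{N}$ and local stochastic matrices $f_\epsilon$ satisfying $f_\epsilon(u,f(u))\ge1-\epsilon$; $F_\epsilon$ acts on measures via the kernel $F_\epsilon(x,[w]_U)=\prod_{i\in U}f_\epsilon(x_{i+\mathcal{N}},w_i)$. $\mathcal{M}_\epsilon$ is the set of $\mu\in\mathcal{M}(\mathcal{A}^{\mathbb{Z}})$ with $F_\epsilon\mu=\mu$. A measure $\nu$ is stable if there exists a family $(\pi_\epsilon)_{\epsilon>0}$ with $\pi_\epsilon\in\mathcal{M}_\epsilon$ and $\pi_\epsilon\to\nu$ weakly as $\epsilon\to0$; $\mathcal{M}_{\mathrm{stable}}$ is the set of stable measures. *)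

theory Defs
  imports "HOL-Probability.Probability"
begin

text \<open>Configuration space A^Z, with A the finite type 'a, as a measurable space:
  product sigma-algebra (= Borel sigma-algebra of the product of discrete topologies).\<close>
definition AZ :: "(int \<Rightarrow> 'a) measure" where
  "AZ = PiM UNIV (\<lambda>_. count_space UNIV)"

definition AZtop :: "(int \<Rightarrow> 'a) topology" where
  "AZtop = product_topology (\<lambda>_. discrete_topology UNIV) UNIV"

definition shift :: "(int \<Rightarrow> 'a) \<Rightarrow> (int \<Rightarrow> 'a)" where
  "shift x = (\<lambda>i. x (i + 1))"

definition Minv :: "(int \<Rightarrow> 'a::finite) measure set" where
  "Minv = {\<mu>. prob_space \<mu> \<and> sets \<mu> = sets AZ \<and> distr \<mu> AZ shift = \<mu>}"

definition pattern :: "int set \<Rightarrow> (int \<Rightarrow> 'a) \<Rightarrow> int \<Rightarrow> (int \<Rightarrow> 'a)" where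
  "pattern N x i = restrict (\<lambda>j. x (i + j)) N"

definition pca_kernel :: "int set \<Rightarrow> ((int \<Rightarrow> 'a) \<Rightarrow> 'a pmf) \<Rightarrow> (int \<Rightarrow> 'a) \<Rightarrow> (int \<Rightarrow> 'a) measure" where
  "pca_kernel N g x = PiM UNIV (\<lambda>i. measure_pmf (g (pattern N x i)))"

definition pca_apply :: "int set \<Rightarrow> ((int \<Rightarrow> 'a) \<Rightarrow> 'a pmf) \<Rightarrow> (int \<Rightarrow> 'a) measure \<Rightarrow> (int \<Rightarrow> 'a) measure" where
  "pca_apply N g \<mu> = bind \<mu> (pca_kernel N g)"

definition is_perturbation :: "int set \<Rightarrow> ((int \<Rightarrow> 'a) \<Rightarrow> 'a) \<Rightarrow> (real \<Rightarrow> (int \<Rightarrow> 'a) \<Rightarrow> 'a pmf) \<Rightarrow> bool" where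
  "is_perturbation N f fe \<longleftrightarrow> finite N \<and>
     (\<forall>\<epsilon>>0. \<forall>u \<in> PiE N (\<lambda>_. UNIV). pmf (fe \<epsilon> u) (f u) \<ge> 1 - \<epsilon>)"

definition Meps :: "int set \<Rightarrow> (real \<Rightarrow> (int \<Rightarrow> 'a::finite) \<Rightarrow> 'a pmf) \<Rightarrow> real \<Rightarrow> (int \<Rightarrow> 'a) measure set" where
  "Meps N fe \<epsilon> = {\<mu> \<in> Minv. pca_apply N (fe \<epsilon>) \<mu> = \<mu>}"

definition weak_conv_0 :: "(real \<Rightarrow> (int \<Rightarrow> 'a) measure) \<Rightarrow> (int \<Rightarrow> 'a) measure \<Rightarrow> bool" where
  "weak_conv_0 \<pi> \<nu> \<longleftrightarrow> (\<forall>h. continuous_map AZtop euclideanreal h \<longrightarrow>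
      ((\<lambda>\<epsilon>. \<integral>x. h x \<partial>(\<pi> \<epsilon>)) \<longlongrightarrow> (\<integral>x. h x \<partial>\<nu>)) (at_right 0))"

definition Mstable :: "int set \<Rightarrow> (real \<Rightarrow> (int \<Rightarrow> 'a::finite) \<Rightarrow> 'a pmf) \<Rightarrow> (int \<Rightarrow> 'a) measure set" where
  "Mstable N fe = {\<nu> \<in> Minv. \<exists>\<pi>. (\<forall>\<epsilon>>0. \<pi> \<epsilon> \<in> Meps N fe \<epsilon>) \<and> weak_conv_0 \<pi> \<nu>}"

definition mix :: "real \<Rightarrow> (int \<Rightarrow> 'a) measure \<Rightarrow> (int \<Rightarrow> 'a) measure \<Rightarrow> (int \<Rightarrow> 'a) measure" where
  "mix t \<mu> \<nu> = measure_of (space AZ) (sets AZ)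
     (\<lambda>E. ennreal t * emeasure \<mu> E + ennreal (1 - t) * emeasure \<nu> E)"

end

theory Submission
  imports Defs
begin

text \<open>
  Both defining conditions of a stable measure are affine. The convex combination
  \<open>t \<mu> + (1 - t) \<nu>\<close> is the Giry-monad bind of a Bernoulli coin with \<open>\<mu>\<close> and \<open>\<nu>\<close>, so by
  associativity of bind it commutes with the PCA kernel and with the shift, and integrals
  against it are the corresponding convex combinations. Hence if \<open>\<pi>\<^sub>1 \<epsilon> \<rightarrow> \<nu>\<^sub>1\<close> and
  \<open>\<pi>\<^sub>2 \<epsilon> \<rightarrow> \<nu>\<^sub>2\<close> with \<open>\<pi>\<^sub>i \<epsilon> \<in> \<M>\<^sub>\<epsilon>\<close>, then \<open>t \<pi>\<^sub>1 \<epsilon> + (1 - t) \<pi>\<^sub>2 \<epsilon>\<close> is again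
  \<open>F\<^sub>\<epsilon>\<close>-invariant and converges weakly to \<open>t \<nu>\<^sub>1 + (1 - t) \<nu>\<^sub>2\<close>; continuous test functions are
  bounded since \<open>A\<^sup>\<int>\<close> is compact.
\<close>

definition mixture :: "real \<Rightarrow> 'a measure \<Rightarrow> 'a measure \<Rightarrow> 'a measure" where
  "mixture t \<mu> \<nu> = measure_pmf (bernoulli_pmf t) \<bind> (\<lambda>b. if b then \<mu> else \<nu>)"

context
  fixes M \<mu> \<nu> :: "'a measure"
  assumes prob_\<mu>: "prob_space \<mu>" and sets_\<mu>: "sets \<mu> = sets M"
    and prob_\<nu>: "prob_space \<nu>" and sets_\<nu>: "sets \<nu> = sets M"
begin

lemma measurable_mixture_choice:
  "(\<lambda>b. if b then \<mu> else \<nu>) \<in> measurable (measure_pmf p) (subprob_algebra M)"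
  using prob_\<mu> prob_\<nu> sets_\<mu> sets_\<nu>
  by (auto simp: space_subprob_algebra prob_space_imp_subprob_space)

lemma sets_mixture: "sets (mixture t \<mu> \<nu>) = sets M"
  unfolding mixture_def using sets_\<mu> sets_\<nu> by (subst sets_bind[where N=M]) auto

lemma prob_space_mixture: "prob_space (mixture t \<mu> \<nu>)"
  unfolding mixture_def using prob_\<mu> prob_\<nu>
  by (intro prob_space.prob_space_bind[OF prob_space_measure_pmf _ measurable_mixture_choice]) auto

lemma emeasure_mixture:
  assumes "0 \<le> t" "t \<le> 1" "A \<in> sets M"
  shows "emeasure (mixture t \<mu> \<nu>) A = ennreal t * emeasure \<mu> A + ennreal (1 - t) * emeasure \<nu> A"
  unfolding mixture_def using assms
  by (subst emeasure_bind[OF _ measurable_mixture_choice]) (auto simp: mult.commute)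

lemma measure_of_convex_combination:
  assumes "0 \<le> t" "t \<le> 1"
  shows "measure_of (space M) (sets M) (\<lambda>A. ennreal t * emeasure \<mu> A + ennreal (1 - t) * emeasure \<nu> A)
    = mixture t \<mu> \<nu>"
proof -
  have "space (mixture t \<mu> \<nu>) = space M"
    using sets_mixture by (rule sets_eq_imp_space_eq)
  then have "mixture t \<mu> \<nu> = measure_of (space M) (sets M) (emeasure (mixture t \<mu> \<nu>))"
    using sets_mixture measure_of_of_measure by metis
  also have "\<dots> = measure_of (space M) (sets M)
      (\<lambda>A. ennreal t * emeasure \<mu> A + ennreal (1 - t) * emeasure \<nu> A)"
    by (rule measure_of_eq[OF sets.space_closed]) (simp add: sets.sigma_sets_eq emeasure_mixture assms)
  finally show ?thesis ..
qed

lemma distr_mixture: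
  assumes "f \<in> measurable M K"
  shows "distr (mixture t \<mu> \<nu>) K f = mixture t (distr \<mu> K f) (distr \<nu> K f)"
  unfolding mixture_def
  by (subst distr_bind[OF measurable_mixture_choice _ assms]) (auto intro!: bind_cong)

lemma bind_mixture:
  assumes "K \<in> measurable M (subprob_algebra R)"
  shows "mixture t \<mu> \<nu> \<bind> K = mixture t (\<mu> \<bind> K) (\<nu> \<bind> K)"
  unfolding mixture_def
  by (subst bind_assoc[OF measurable_mixture_choice assms]) (auto intro!: bind_cong)

lemma integral_mixture:
  fixes h :: "'a \<Rightarrow> real"
  assumes "0 \<le> t" "t \<le> 1" and bounded: "\<And>x. \<bar>h x\<bar> \<le> B"
  shows "(\<integral>x. h x \<partial>mixture t \<mu> \<nu>) = t * (\<integral>x. h x \<partial>\<mu>) + (1 - t) * (\<integral>x. h x \<partial>\<nu>)"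
proof (cases "h \<in> borel_measurable M")
  case True
  have "(\<integral>x. h x \<partial>mixture t \<mu> \<nu>)
      = (\<integral>b. (\<integral>x. h x \<partial>(if b then \<mu> else \<nu>)) \<partial>measure_pmf (bernoulli_pmf t))"
    unfolding mixture_def
  proof (rule integral_bind[OF True bounded measurable_mixture_choice])
    show "finite_measure (measure_pmf (bernoulli_pmf t))"
      by (rule prob_space.finite_measure[OF prob_space_measure_pmf])
    show "AE b in measure_pmf (bernoulli_pmf t).
        emeasure (if b then \<mu> else \<nu>) (space (if b then \<mu> else \<nu>)) \<le> ennreal 1"
      using prob_space.emeasure_space_1[OF prob_\<mu>] prob_space.emeasure_space_1[OF prob_\<nu>]
      by (intro AE_I2) auto
  qed
  then show ?thesis
    using assms by (simp add: mult.commute)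
next
  case False
  \<comment> \<open>then all three Bochner integrals are the junk value \<open>0\<close>\<close>
  have "\<not> integrable \<mu>' h" if "sets \<mu>' = sets M" for \<mu>' :: "'a measure"
    using False measurable_cong_sets[OF that refl] by auto
  then show ?thesis
    using sets_\<mu> sets_\<nu> sets_mixture by (simp add: not_integrable_integral_eq)
qed

end

lemma measurable_product_pmf_kernel:
  fixes q :: "'i \<Rightarrow> 'm \<Rightarrow> 'a pmf"
  assumes "\<And>i. q i \<in> measurable M (count_space UNIV)"
  shows "(\<lambda>x. PiM I (\<lambda>i. measure_pmf (q i x))) \<in> measurable M (subprob_algebra (PiM I (\<lambda>_. count_space UNIV)))"
proof (rule measurable_subprob_algebra_generated[OF sets_PiM Int_stable_prod_algebra prod_algebra_sets_into_space])
  fix x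
  show "subprob_space (PiM I (\<lambda>i. measure_pmf (q i x)))"
    by (intro prob_space_imp_subprob_space prob_space_PiM prob_space_measure_pmf)
  show "sets (PiM I (\<lambda>i. measure_pmf (q i x))) = sets (PiM I (\<lambda>_. count_space UNIV))"
    by (rule sets_PiM_cong) auto
next
  have "emeasure (PiM I (\<lambda>i. measure_pmf (q i x))) (PiE I (\<lambda>i. space (count_space UNIV))) = 1" for x
    using prob_space.emeasure_space_1[OF prob_space_PiM[OF prob_space_measure_pmf]]
    by (simp add: space_PiM)
  then show "(\<lambda>x. emeasure (PiM I (\<lambda>i. measure_pmf (q i x))) (PiE I (\<lambda>i. space (count_space UNIV))))
      \<in> borel_measurable M"
    by simp
next
  fix A assume "A \<in> prod_algebra I (\<lambda>_. count_space (UNIV :: 'a set))"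
  then obtain J E where A: "A = prod_emb I (\<lambda>_. count_space UNIV) J (PiE J E)"
    and J: "finite J" "J \<subseteq> I"
    by (auto elim!: prod_algebraE)
  have "emeasure (PiM I (\<lambda>i. measure_pmf (q i x))) A = (\<Prod>i\<in>J. emeasure (measure_pmf (q i x)) (E i))" for x
  proof -
    have "A = prod_emb I (\<lambda>i. measure_pmf (q i x)) J (PiE J E)"
      unfolding A by (simp add: prod_emb_def)
    then show ?thesis
      using J by (simp add: product_prob_space.emeasure_PiM_emb product_prob_spaceI prob_space_measure_pmf)
  qed
  moreover have "(\<lambda>x. emeasure (measure_pmf (q i x)) (E i)) \<in> borel_measurable M" for i
    using measurable_compose[OF assms borel_measurable_count_space] .
  ultimately show "(\<lambda>x. emeasure (PiM I (\<lambda>i. measure_pmf (q i x))) A) \<in> borel_measurable M"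
    by (simp add: borel_measurable_prod_ennreal)
qed

lemma space_AZ: "space AZ = UNIV"
  by (simp add: AZ_def space_PiM)

lemma measurable_shift: "shift \<in> measurable AZ AZ"
  unfolding shift_def AZ_def by (rule measurable_PiM_single') (auto simp: space_PiM)

lemma measurable_pattern:
  assumes "finite N"
  shows "(\<lambda>x. pattern N x i) \<in> measurable AZ (count_space (PiE N (\<lambda>_. UNIV :: 'a::finite set)))"
proof -
  have countable: "countable (PiE N (\<lambda>_. UNIV :: 'a set))"
    using assms by (intro countable_finite finite_PiE) auto
  show ?thesis
  proof (subst measurable_count_space_eq_countable[OF countable], intro conjI ballI Pi_I)
    show "pattern N x i \<in> PiE N (\<lambda>_. UNIV)" for x :: "int \<Rightarrow> 'a"
      by (simp add: pattern_def)
  next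
    fix u :: "int \<Rightarrow> 'a" assume u: "u \<in> PiE N (\<lambda>_. UNIV)"
    have "(\<lambda>x. pattern N x i) -` {u} \<inter> space AZ = {x \<in> space AZ. \<forall>j\<in>N. x (i + j) = u j}"
      using u by (auto simp: pattern_def space_AZ PiE_def extensional_def fun_eq_iff)
    also have "\<dots> \<in> sets AZ"
      unfolding AZ_def using assms by measurable
    finally show "(\<lambda>x. pattern N x i) -` {u} \<inter> space AZ \<in> sets AZ" .
  qed
qed

lemma measurable_pca_kernel:
  assumes "finite N"
  shows "pca_kernel N g \<in> measurable AZ (subprob_algebra (AZ :: (int \<Rightarrow> 'a::finite) measure))"
proof -
  have "(\<lambda>x. g (pattern N x i)) \<in> measurable AZ (count_space UNIV)" for i
    using measurable_compose[OF measurable_pattern[OF assms] measurable_count_space] .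
  then have "(\<lambda>x. PiM UNIV (\<lambda>i. measure_pmf (g (pattern N x i))))
      \<in> measurable AZ (subprob_algebra (PiM UNIV (\<lambda>_. count_space UNIV)))"
    by (rule measurable_product_pmf_kernel)
  then show ?thesis
    unfolding pca_kernel_def[abs_def] AZ_def .
qed

lemma bounded_continuous_map_AZtop:
  assumes "continuous_map AZtop euclideanreal (h :: (int \<Rightarrow> 'a::finite) \<Rightarrow> real)"
  obtains B where "\<And>x. \<bar>h x\<bar> \<le> B"
proof -
  have "compact_space (AZtop :: (int \<Rightarrow> 'a) topology)"
    unfolding AZtop_def by (simp add: compact_space_product_topology compact_space_discrete_topology)
  then have "compactin euclideanreal (h ` topspace AZtop)"
    using image_compactin assms unfolding compact_space_def by blast
  then have "bounded (range h)"
    by (simp add: AZtop_def topspace_product_topology compact_imp_bounded)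
  then show ?thesis
    using that by (metis bounded_real rangeI)
qed

lemma Minv_D:
  assumes "\<mu> \<in> Minv"
  shows "prob_space \<mu>" "sets \<mu> = sets AZ" "distr \<mu> AZ shift = \<mu>"
  using assms by (auto simp: Minv_def)

lemma mix_eq_mixture:
  assumes "\<mu> \<in> Minv" "\<nu> \<in> Minv" "0 \<le> t" "t \<le> 1"
  shows "mix t \<mu> \<nu> = mixture t \<mu> \<nu>"
  unfolding mix_def using assms Minv_D by (blast intro: measure_of_convex_combination)

lemma mix_in_Minv:
  assumes "\<mu> \<in> Minv" "\<nu> \<in> Minv" "0 \<le> t" "t \<le> 1"
  shows "mix t \<mu> \<nu> \<in> Minv"
  using assms Minv_D[OF assms(1)] Minv_D[OF assms(2)]
  by (simp add: mix_eq_mixture Minv_def prob_space_mixture sets_mixture distr_mixture measurable_shift)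

lemma mix_in_Meps:
  assumes "finite N" "\<mu> \<in> Meps N fe \<epsilon>" "\<nu> \<in> Meps N fe \<epsilon>" "0 \<le> t" "t \<le> 1"
  shows "mix t \<mu> \<nu> \<in> Meps N fe \<epsilon>"
proof -
  have Minv: "\<mu> \<in> Minv" "\<nu> \<in> Minv"
    and fixed: "pca_apply N (fe \<epsilon>) \<mu> = \<mu>" "pca_apply N (fe \<epsilon>) \<nu> = \<nu>"
    using assms by (auto simp: Meps_def)
  have "pca_apply N (fe \<epsilon>) (mix t \<mu> \<nu>) = mix t \<mu> \<nu>"
    using Minv fixed assms(1,4,5) Minv_D[OF Minv(1)] Minv_D[OF Minv(2)]
    by (simp add: mix_eq_mixture pca_apply_def bind_mixture[OF _ _ _ _ measurable_pca_kernel])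
  then show ?thesis
    using mix_in_Minv[OF Minv assms(4,5)] by (simp add: Meps_def)
qed

lemma weak_conv_0_mix:
  assumes "weak_conv_0 \<pi>\<^sub>1 \<nu>\<^sub>1" "weak_conv_0 \<pi>\<^sub>2 \<nu>\<^sub>2"
    and "\<And>\<epsilon>. \<epsilon> > 0 \<Longrightarrow> \<pi>\<^sub>1 \<epsilon> \<in> Minv" "\<And>\<epsilon>. \<epsilon> > 0 \<Longrightarrow> \<pi>\<^sub>2 \<epsilon> \<in> Minv"
    and "\<nu>\<^sub>1 \<in> Minv" "\<nu>\<^sub>2 \<in> Minv" "0 \<le> t" "t \<le> 1"
  shows "weak_conv_0 (\<lambda>\<epsilon>. mix t (\<pi>\<^sub>1 \<epsilon>) (\<pi>\<^sub>2 \<epsilon>)) (mix t \<nu>\<^sub>1 \<nu>\<^sub>2)"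
  unfolding weak_conv_0_def
proof (intro allI impI)
  fix h :: "(int \<Rightarrow> 'a) \<Rightarrow> real"
  assume h: "continuous_map AZtop euclideanreal h"
  obtain B where bounded: "\<And>x. \<bar>h x\<bar> \<le> B"
    using bounded_continuous_map_AZtop[OF h] by blast
  have integral_mix: "(\<integral>x. h x \<partial>mix t \<mu> \<nu>) = t * (\<integral>x. h x \<partial>\<mu>) + (1 - t) * (\<integral>x. h x \<partial>\<nu>)"
    if "\<mu> \<in> Minv" "\<nu> \<in> Minv" for \<mu> \<nu>
    using that assms(7,8) Minv_D[OF that(1)] Minv_D[OF that(2)]
    by (simp add: mix_eq_mixture integral_mixture[OF _ _ _ _ _ _ bounded])
  have "((\<lambda>\<epsilon>. t * (\<integral>x. h x \<partial>\<pi>\<^sub>1 \<epsilon>) + (1 - t) * (\<integral>x. h x \<partial>\<pi>\<^sub>2 \<epsilon>)) \<longlongrightarrow>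
      t * (\<integral>x. h x \<partial>\<nu>\<^sub>1) + (1 - t) * (\<integral>x. h x \<partial>\<nu>\<^sub>2)) (at_right 0)"
    using assms(1,2) h unfolding weak_conv_0_def by (intro tendsto_intros) auto
  moreover have "\<forall>\<^sub>F \<epsilon> in at_right 0. t * (\<integral>x. h x \<partial>\<pi>\<^sub>1 \<epsilon>) + (1 - t) * (\<integral>x. h x \<partial>\<pi>\<^sub>2 \<epsilon>)
      = (\<integral>x. h x \<partial>mix t (\<pi>\<^sub>1 \<epsilon>) (\<pi>\<^sub>2 \<epsilon>))"
    using eventually_at_right_less[of 0] by eventually_elim (simp add: integral_mix assms(3,4))
  ultimately show "((\<lambda>\<epsilon>. \<integral>x. h x \<partial>mix t (\<pi>\<^sub>1 \<epsilon>) (\<pi>\<^sub>2 \<epsilon>)) \<longlongrightarrow> (\<integral>x. h x \<partial>mix t \<nu>\<^sub>1 \<nu>\<^sub>2)) (at_right 0)"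
    using assms(5,6) by (simp add: integral_mix Lim_transform_eventually)
qed

theorem mainTheorem8:
  fixes N :: "int set" and f :: "(int \<Rightarrow> 'a::finite) \<Rightarrow> 'a"
    and fe :: "real \<Rightarrow> (int \<Rightarrow> 'a) \<Rightarrow> 'a pmf"
  assumes "is_perturbation N f fe"
  shows "\<forall>\<nu>1 \<in> Mstable N fe. \<forall>\<nu>2 \<in> Mstable N fe. \<forall>t \<in> {0..1::real}.
           mix t \<nu>1 \<nu>2 \<in> Mstable N fe"
proof (intro ballI)
  fix \<nu>1 \<nu>2 t
  assume "\<nu>1 \<in> Mstable N fe" "\<nu>2 \<in> Mstable N fe" and t: "t \<in> {0..1::real}"
  then obtain \<pi>1 \<pi>2 where "\<nu>1 \<in> Minv" "\<nu>2 \<in> Minv"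
    and \<pi>: "\<forall>\<epsilon>>0. \<pi>1 \<epsilon> \<in> Meps N fe \<epsilon>" "\<forall>\<epsilon>>0. \<pi>2 \<epsilon> \<in> Meps N fe \<epsilon>"
    and "weak_conv_0 \<pi>1 \<nu>1" "weak_conv_0 \<pi>2 \<nu>2"
    by (auto simp: Mstable_def)
  moreover have "finite N"
    using assms by (simp add: is_perturbation_def)
  moreover have "\<pi>1 \<epsilon> \<in> Minv" "\<pi>2 \<epsilon> \<in> Minv" if "\<epsilon> > 0" for \<epsilon>
    using \<pi> that by (auto simp: Meps_def)
  ultimately show "mix t \<nu>1 \<nu>2 \<in> Mstable N fe"
    using t unfolding Mstable_def
    by (auto intro!: exI[of _ "\<lambda>\<epsilon>. mix t (\<pi>1 \<epsilon>) (\<pi>2 \<epsilon>)"] mix_in_Minv mix_in_Meps weak_conv_0_mix)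
qed

end
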